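(* Let $B_n=F(0,1,2,\ldots,n-1)$. For all $0\le k\le n$, $$\mathbf{cf}_{n,k}(p,q)=\mathbf{fT}_{n-k}(B_n,p,q)\qquad\text{and}\qquad \mathbf{Sf}_{n,k}(p,q)=\mathbf{rT}_{n-k}(B_n,p,q).$$
   Context: For $m\ge 1$, a Fibonacci tiling of height $m$ is a tiling of a column of height $m$ by tiles of height 1 and 2 whose bottom-most tile has height 1; $F_m(p,q)=\sum_T q^{\mathrm{one}(T)}p^{\mathrm{two}(T)}$ over such tilings, where $\mathrm{one}(T),\mathrm{two}(T)$ count tiles of height 1, 2 (so $F_1=q$, $F_2=q^2$, $F_m=qF_{m-1}+pF_{m-2}$); there are no tilings of height 0 and $F_0(p,q)=0$. Let $(x)_{\downarrow_{F,p,q,0}}=(x)_{\uparrow_{F,p,q,0}}=1$ and for $k\ge1$, $(x)_{\downarrow_{F,p,q,k}}=x(x-F_1(p,q))\cdots(x-F_{k-1}(p,q))$, $(x)_{\uparrow_{F,p,q,k}}=x(x+F_1(p,q))\cdots(x+F_{k-1}(p,q))$. Define $\mathbf{Sf}_{n,k}(p,q)$ and $\mathbf{cf}_{n,k}(p,q)$ ($0\le k\le n$) by $x^n=\sum_{k=0}^n\mathbf{Sf}_{n,k}(p,q)(x)_{\downarrow_{F,p,q,k}}$ and $(x)_{\uparrow_{F,p,q,n}}=\sum_{k=0}^n\mathbf{cf}_{n,k}(p,q)x^k$. A Ferrers board $F(b_1,\ldots,b_n)$ has column heights $b_1,\ldots,b_n$ from left to right. A Fibonacci file placement of $k$ tilings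 in it is a choice of columns $i_1<\cdots<i_k$ with a Fibonacci tiling of height $b_{i_j}$ in column $i_j$; a Fibonacci rook placement of $k$ tilings is a choice of columns $i_1<\cdots<i_k$ with a Fibonacci tiling of height $b_{i_s-(s-1)}$ in column $i_s$ for each $s$. The weight of a placement is $q^ap^b$ with $a,b$ the total numbers of tiles of height 1, 2. $\mathbf{fT}_k(B,p,q)$ and $\mathbf{rT}_k(B,p,q)$ are the sums of the weights of all file, respectively rook, placements of $k$ tilings (the empty placement has weight 1). *)

theory Defs
  imports "HOL-Computational_Algebra.Polynomial" "HOL-Library.FuncSet"
begin

text \<open>Fibonacci tilings of a column of height m: lists of tile heights (each 1 or 2),
  listed from bottom to top, summing to m, whose bottom-most tile has height 1.\<close>
definition fib_tilings :: "nat \<Rightarrow> nat list set" where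
  "fib_tilings m = {ts. set ts \<subseteq> {1,2} \<and> sum_list ts = m \<and> ts \<noteq> [] \<and> hd ts = 1}"

definition tile_weight :: "'a::comm_ring_1 \<Rightarrow> 'a \<Rightarrow> nat list \<Rightarrow> 'a" where
  "tile_weight p q ts = q ^ count_list ts 1 * p ^ count_list ts 2"

definition Fib :: "'a::comm_ring_1 \<Rightarrow> 'a \<Rightarrow> nat \<Rightarrow> 'a" where
  "Fib p q m = (\<Sum>ts\<in>fib_tilings m. tile_weight p q ts)"

definition fall_F :: "'a::comm_ring_1 \<Rightarrow> 'a \<Rightarrow> nat \<Rightarrow> 'a poly" where
  "fall_F p q k = (\<Prod>i<k. [:- Fib p q i, 1:])"

definition rise_F :: "'a::comm_ring_1 \<Rightarrow> 'a \<Rightarrow> nat \<Rightarrow> 'a poly" where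
  "rise_F p q k = (\<Prod>i<k. [:Fib p q i, 1:])"

definition Sf :: "'a::comm_ring_1 \<Rightarrow> 'a \<Rightarrow> nat \<Rightarrow> nat \<Rightarrow> 'a" where
  "Sf p q n = (THE s. (\<forall>j>n. s j = 0) \<and>
      [:0, 1:] ^ n = (\<Sum>j\<le>n. smult (s j) (fall_F p q j)))"

definition cf :: "'a::comm_ring_1 \<Rightarrow> 'a \<Rightarrow> nat \<Rightarrow> nat \<Rightarrow> 'a" where
  "cf p q n k = coeff (rise_F p q n) k"

text \<open>A Ferrers board with n columns is given by n and a height function b,
  b i being the height of column i, for 1 \<le> i \<le> n.\<close>
definition file_placements :: "nat \<Rightarrow> (nat \<Rightarrow> nat) \<Rightarrow> nat \<Rightarrow> (nat set \<times> (nat \<Rightarrow> nat list)) set" where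
  "file_placements n b k = {(S, T). S \<subseteq> {1..n} \<and> card S = k \<and>
      T \<in> (\<Pi>\<^sub>E i\<in>S. fib_tilings (b i))}"

definition rook_placements :: "nat \<Rightarrow> (nat \<Rightarrow> nat) \<Rightarrow> nat \<Rightarrow> (nat set \<times> (nat \<Rightarrow> nat list)) set" where
  "rook_placements n b k = {(S, T). S \<subseteq> {1..n} \<and> card S = k \<and>
      T \<in> (\<Pi>\<^sub>E i\<in>S. fib_tilings (b (i - card {j\<in>S. j < i})))}"

definition placement_weight :: "'a::comm_ring_1 \<Rightarrow> 'a \<Rightarrow> nat set \<times> (nat \<Rightarrow> nat list) \<Rightarrow> 'a" where
  "placement_weight p q P = (\<Prod>i\<in>fst P. tile_weight p q (snd P i))"

definition fT :: "nat \<Rightarrow> (nat \<Rightarrow> nat) \<Rightarrow> nat \<Rightarrow> 'a::comm_ring_1 \<Rightarrow> 'a \<Rightarrow> 'a" where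
  "fT n b k p q = (\<Sum>P\<in>file_placements n b k. placement_weight p q P)"

definition rT :: "nat \<Rightarrow> (nat \<Rightarrow> nat) \<Rightarrow> nat \<Rightarrow> 'a::comm_ring_1 \<Rightarrow> 'a \<Rightarrow> 'a" where
  "rT n b k p q = (\<Sum>P\<in>rook_placements n b k. placement_weight p q P)"

text \<open>B_n = F(0,1,...,n-1): column i (1-based) has height i - 1.\<close>
definition staircase :: "nat \<Rightarrow> nat" where
  "staircase i = i - 1"

end

theory Submission
  imports Defs
begin

text \<open>Both sides reduce to sums, over m-element sets S of columns of B_n, of products of
  Fibonacci weights. For file placements column i contributes F_{i-1}, so the sum is the
  elementary symmetric function of F_0, ..., F_{n-1}, i.e. a coefficient of the rising product.
  For rook placements, removing the last column gives the recursion
  r_{n+1,m+1} = r_{n,m+1} + F_{n-m} r_{n,m}, which is exactly the recursion forced on the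
  expansion coefficients of x^n in the falling basis by x (x)_k = (x)_{k+1} + F_k (x)_k;
  the falling basis is monic and triangular, so the expansion is unique.\<close>

lemma finite_fib_tilings: "finite (fib_tilings m)"
proof -
  have "length ts \<le> sum_list ts" if "set ts \<subseteq> {1,2::nat}" for ts
    using that by (induction ts) auto
  then have "fib_tilings m \<subseteq> {ts. set ts \<subseteq> {1,2} \<and> length ts \<le> m}"
    unfolding fib_tilings_def by auto
  moreover have "finite {ts. set ts \<subseteq> {1,2::nat} \<and> length ts \<le> m}"
    by (rule finite_lists_length_le) auto
  ultimately show ?thesis by (rule finite_subset)
qed

lemma sum_placement_weight:
  fixes p q :: "'a::comm_ring_1"
  assumes "finite K" and "\<And>S. S \<in> K \<Longrightarrow> finite S"
  shows "(\<Sum>P\<in>{(S, T). S \<in> K \<and> T \<in> (\<Pi>\<^sub>E i\<in>S. fib_tilings (h S i))}. placement_weight p q P)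
       = (\<Sum>S\<in>K. \<Prod>i\<in>S. Fib p q (h S i))"
proof -
  have "(\<Sum>S\<in>K. \<Prod>i\<in>S. Fib p q (h S i))
      = (\<Sum>S\<in>K. \<Sum>T\<in>(\<Pi>\<^sub>E i\<in>S. fib_tilings (h S i)). \<Prod>i\<in>S. tile_weight p q (T i))"
    unfolding Fib_def using assms(2)
    by (intro sum.cong refl prod_sum_PiE) (auto simp: finite_fib_tilings)
  also have "\<dots> = (\<Sum>(S, T)\<in>Sigma K (\<lambda>S. \<Pi>\<^sub>E i\<in>S. fib_tilings (h S i)). \<Prod>i\<in>S. tile_weight p q (T i))"
    using assms by (intro sum.Sigma) (auto intro!: finite_PiE simp: finite_fib_tilings)
  also have "Sigma K (\<lambda>S. \<Pi>\<^sub>E i\<in>S. fib_tilings (h S i))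
      = {(S, T). S \<in> K \<and> T \<in> (\<Pi>\<^sub>E i\<in>S. fib_tilings (h S i))}"
    by auto
  finally show ?thesis
    by (simp add: placement_weight_def case_prod_unfold)
qed

definition card_subsets :: "nat \<Rightarrow> nat \<Rightarrow> nat set set" where
  "card_subsets n m = {S. S \<subseteq> {1..n} \<and> card S = m}"

lemma finite_card_subsets: "finite (card_subsets n m)"
  unfolding card_subsets_def by (rule finite_subset[of _ "Pow {1..n}"]) auto

lemma finite_if_in_card_subsets: "S \<in> card_subsets n m \<Longrightarrow> finite S"
  unfolding card_subsets_def using finite_subset by auto

lemma card_subsets_0: "card_subsets n 0 = {{}}"
  unfolding card_subsets_def using finite_subset by fastforce

lemma card_subsets_eq_empty: "n < m \<Longrightarrow> card_subsets n m = {}"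
  unfolding card_subsets_def by (auto dest: card_mono[rotated, OF _ finite_atLeastAtMost])

lemma card_subsets_Suc:
  "card_subsets (Suc n) (Suc m) = card_subsets n (Suc m) \<union> insert (Suc n) ` card_subsets n m"
proof (intro equalityI subsetI)
  fix S assume S: "S \<in> card_subsets (Suc n) (Suc m)"
  show "S \<in> card_subsets n (Suc m) \<union> insert (Suc n) ` card_subsets n m"
  proof (cases "Suc n \<in> S")
    case True
    then have "S - {Suc n} \<in> card_subsets n m" "S = insert (Suc n) (S - {Suc n})"
      using S finite_if_in_card_subsets[OF S] unfolding card_subsets_def by auto
    then show ?thesis by blast
  next
    case False
    then have "S \<in> card_subsets n (Suc m)"
      using S unfolding card_subsets_def by (force simp: subset_iff le_Suc_eq)
    then show ?thesis by blast
  qed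
next
  fix S assume "S \<in> card_subsets n (Suc m) \<union> insert (Suc n) ` card_subsets n m"
  then show "S \<in> card_subsets (Suc n) (Suc m)"
  proof
    assume "S \<in> card_subsets n (Suc m)"
    then show ?thesis unfolding card_subsets_def by auto
  next
    assume "S \<in> insert (Suc n) ` card_subsets n m"
    then obtain S' where S': "S' \<in> card_subsets n m" "S = insert (Suc n) S'" by blast
    then show ?thesis
      using finite_if_in_card_subsets[OF S'(1)] unfolding card_subsets_def
      by (auto simp: card_insert_if)
  qed
qed

lemma sum_card_subsets_Suc:
  fixes f :: "nat set \<Rightarrow> 'a::comm_monoid_add"
  shows "(\<Sum>S\<in>card_subsets (Suc n) (Suc m). f S)
       = (\<Sum>S\<in>card_subsets n (Suc m). f S) + (\<Sum>S\<in>card_subsets n m. f (insert (Suc n) S))"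
proof -
  have not_in: "Suc n \<notin> S" if "S \<in> card_subsets n k" for S k
    using that unfolding card_subsets_def by auto
  have "inj_on (insert (Suc n)) (card_subsets n m)"
    by (rule inj_onI) (metis Diff_insert_absorb not_in)
  moreover have "card_subsets n (Suc m) \<inter> insert (Suc n) ` card_subsets n m = {}"
    using not_in by blast
  ultimately show ?thesis
    unfolding card_subsets_Suc
    by (simp add: sum.union_disjoint sum.reindex finite_card_subsets)
qed

lemma fT_eq_sum_card_subsets:
  "fT n b m p q = (\<Sum>S\<in>card_subsets n m. \<Prod>i\<in>S. Fib p q (b i))"
proof -
  have "file_placements n b m
      = {(S, T). S \<in> card_subsets n m \<and> T \<in> (\<Pi>\<^sub>E i\<in>S. fib_tilings ((\<lambda>S i. b i) S i))}"
    unfolding file_placements_def card_subsets_def by auto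
  then show ?thesis
    unfolding fT_def
    by (simp add: sum_placement_weight finite_card_subsets finite_if_in_card_subsets)
qed

lemma rT_eq_sum_card_subsets:
  "rT n b m p q = (\<Sum>S\<in>card_subsets n m. \<Prod>i\<in>S. Fib p q (b (i - card {j\<in>S. j < i})))"
proof -
  have "rook_placements n b m = {(S, T). S \<in> card_subsets n m \<and>
      T \<in> (\<Pi>\<^sub>E i\<in>S. fib_tilings ((\<lambda>S i. b (i - card {j\<in>S. j < i})) S i))}"
    unfolding rook_placements_def card_subsets_def by auto
  then show ?thesis
    unfolding rT_def
    by (simp add: sum_placement_weight finite_card_subsets finite_if_in_card_subsets)
qed

definition file_number :: "(nat \<Rightarrow> 'a::comm_ring_1) \<Rightarrow> nat \<Rightarrow> nat \<Rightarrow> 'a" where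
  "file_number c n m = (\<Sum>S\<in>card_subsets n m. \<Prod>i\<in>S. c (i - 1))"

definition rook_number :: "(nat \<Rightarrow> 'a::comm_ring_1) \<Rightarrow> nat \<Rightarrow> nat \<Rightarrow> 'a" where
  "rook_number c n m = (\<Sum>S\<in>card_subsets n m. \<Prod>i\<in>S. c (i - card {j\<in>S. j < i} - 1))"

lemma file_number_0 [simp]: "file_number c n 0 = 1"
  by (simp add: file_number_def card_subsets_0)

lemma file_number_eq_0: "n < m \<Longrightarrow> file_number c n m = 0"
  by (simp add: file_number_def card_subsets_eq_empty)

lemma file_number_Suc:
  "file_number c (Suc n) (Suc m) = file_number c n (Suc m) + c n * file_number c n m"
proof -
  have "(\<Prod>i\<in>insert (Suc n) S. c (i - 1)) = c n * (\<Prod>i\<in>S. c (i - 1))"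
    if "S \<in> card_subsets n m" for S
    using that finite_if_in_card_subsets[OF that] unfolding card_subsets_def
    by (subst prod.insert) auto
  then show ?thesis
    unfolding file_number_def sum_card_subsets_Suc sum_distrib_left by simp
qed

lemma rook_number_0 [simp]: "rook_number c n 0 = 1"
  by (simp add: rook_number_def card_subsets_0)

lemma rook_number_eq_0: "n < m \<Longrightarrow> rook_number c n m = 0"
  by (simp add: rook_number_def card_subsets_eq_empty)

lemma rook_number_Suc:
  "rook_number c (Suc n) (Suc m) = rook_number c n (Suc m) + c (n - m) * rook_number c n m"
proof -
  have "(\<Prod>i\<in>insert (Suc n) S. c (i - card {j\<in>insert (Suc n) S. j < i} - 1))
      = c (n - m) * (\<Prod>i\<in>S. c (i - card {j\<in>S. j < i} - 1))"
    if S: "S \<in> card_subsets n m" for S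
  proof -
    have S_sub: "S \<subseteq> {1..n}" and "card S = m"
      using S unfolding card_subsets_def by auto
    then have "{j\<in>insert (Suc n) S. j < Suc n} = S" "card S = m"
      by auto
    moreover have "{j\<in>insert (Suc n) S. j < i} = {j\<in>S. j < i}" if "i \<in> S" for i
      using that S_sub by auto
    moreover have "Suc n \<notin> S" using S_sub by auto
    ultimately show ?thesis
      using finite_if_in_card_subsets[OF S] by (simp cong: prod.cong)
  qed
  then show ?thesis
    unfolding rook_number_def sum_card_subsets_Suc sum_distrib_left by simp
qed

definition linear_prod :: "(nat \<Rightarrow> 'a::comm_ring_1) \<Rightarrow> nat \<Rightarrow> 'a poly" where
  "linear_prod c k = (\<Prod>i<k. [:c i, 1:])"

lemma linear_prod_Suc: "linear_prod c (Suc k) = linear_prod c k * [:c k, 1:]"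
  unfolding linear_prod_def by simp

lemma coeff_linear_prod_above: "k < j \<Longrightarrow> coeff (linear_prod c k) j = 0"
proof (induction k arbitrary: j)
  case 0
  then show ?case by (simp add: linear_prod_def coeff_1)
next
  case (Suc k)
  then show ?case by (cases j) (simp_all add: linear_prod_Suc)
qed

lemma coeff_linear_prod_top [simp]: "coeff (linear_prod c k) k = 1"
  by (induction k) (simp_all add: linear_prod_def coeff_linear_prod_above[unfolded linear_prod_def])

lemma coeff_linear_prod: "k \<le> n \<Longrightarrow> coeff (linear_prod c n) k = file_number c n (n - k)"
proof (induction n arbitrary: k)
  case 0
  then show ?case by (simp add: linear_prod_def)
next
  case (Suc n)
  show ?case
  proof (cases k)
    case 0
    then show ?thesis
      using Suc.IH[of 0] by (simp add: linear_prod_Suc file_number_Suc file_number_eq_0)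
  next
    case (Suc k')
    then consider "k' = n" | "k' < n" using Suc.prems by linarith
    then show ?thesis
    proof cases
      case 1
      then show ?thesis using Suc by (simp add: linear_prod_Suc coeff_linear_prod_above)
    next
      case 2
      then have "Suc n - k = Suc (n - Suc k')" "n - k' = Suc (n - Suc k')"
        using Suc by auto
      then show ?thesis
        using Suc Suc.IH[of k'] Suc.IH[of "Suc k'"] 2
        by (simp add: linear_prod_Suc file_number_Suc add.commute)
    qed
  qed
qed

lemma linear_prod_independent:
  fixes d :: "nat \<Rightarrow> 'a::comm_ring_1"
  assumes "(\<Sum>j\<le>n. smult (d j) (linear_prod c j)) = 0" and "j \<le> n"
  shows "d j = 0"
  using assms
proof (induction n arbitrary: j)
  case 0
  then show ?case by (simp add: linear_prod_def)
next
  case (Suc n)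
  have "coeff (\<Sum>j\<le>n. smult (d j) (linear_prod c j)) (Suc n) = 0"
    by (simp add: coeff_sum coeff_linear_prod_above)
  then have "coeff (\<Sum>j\<le>Suc n. smult (d j) (linear_prod c j)) (Suc n) = d (Suc n)"
    by (simp only: sum.atMost_Suc coeff_add) simp
  then have d_Suc: "d (Suc n) = 0"
    using Suc.prems(1) by (metis coeff_0)
  then have "(\<Sum>j\<le>n. smult (d j) (linear_prod c j)) = 0"
    using Suc.prems(1) by simp
  then show ?case
    using Suc.IH Suc.prems(2) d_Suc le_Suc_eq by blast
qed

lemma X_mult_falling_prod:
  "[:0, 1:] * linear_prod (\<lambda>i. - c i) j
     = linear_prod (\<lambda>i. - c i) (Suc j) + smult (c j) (linear_prod (\<lambda>i. - c i) j)"
  by (simp add: linear_prod_Suc algebra_simps)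

lemma X_power_rook_expansion:
  "[:0, 1:] ^ n = (\<Sum>m\<le>n. smult (rook_number c n m) (linear_prod (\<lambda>i. - c i) (n - m)))"
proof (induction n)
  case 0
  then show ?case by (simp add: linear_prod_def)
next
  case (Suc n)
  let ?f = "linear_prod (\<lambda>i. - c i)" and ?r = "rook_number c n"
  have "[:0, 1:] ^ Suc n = (\<Sum>m\<le>n. smult (?r m) ([:0, 1:] * ?f (n - m)))"
    using Suc by (simp add: sum_distrib_left)
  also have "\<dots> = (\<Sum>m\<le>n. smult (?r m) (?f (Suc n - m)))
                + (\<Sum>m\<le>n. smult (c (n - m) * ?r m) (?f (n - m)))"
    unfolding X_mult_falling_prod smult_add_right sum.distrib
    by (simp add: Suc_diff_le mult.commute)
  also have "(\<Sum>m\<le>n. smult (?r m) (?f (Suc n - m)))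
           = (\<Sum>m\<le>Suc n. smult (?r m) (?f (Suc n - m)))"
    by (simp add: rook_number_eq_0)
  also have "\<dots> = ?f (Suc n) + (\<Sum>m\<le>n. smult (?r (Suc m)) (?f (n - m)))"
    by (simp add: sum.atMost_Suc_shift del: sum.atMost_Suc)
  finally have "[:0, 1:] ^ Suc n
      = ?f (Suc n) + (\<Sum>m\<le>n. smult (rook_number c (Suc n) (Suc m)) (?f (n - m)))"
    by (simp add: rook_number_Suc smult_add_left sum.distrib add.assoc)
  also have "\<dots> = (\<Sum>m\<le>Suc n. smult (rook_number c (Suc n) m) (?f (Suc n - m)))"
    by (simp add: sum.atMost_Suc_shift del: sum.atMost_Suc)
  finally show ?case .
qed

lemma Sf_eq_rook_number:
  assumes "k \<le> n"
  shows "Sf p q n k = rook_number (Fib p q) n (n - k)"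
proof -
  define s where "s j = (if j \<le> n then rook_number (Fib p q) n (n - j) else 0)" for j
  have fall: "fall_F p q = linear_prod (\<lambda>i. - Fib p q i)"
    unfolding fall_F_def linear_prod_def by auto
  have expansion: "[:0, 1:] ^ n = (\<Sum>j\<le>n. smult (s j) (fall_F p q j))"
    unfolding X_power_rook_expansion[of _ "Fib p q"] fall s_def atLeast0AtMost[symmetric]
    by (subst sum.atLeastAtMost_rev) simp
  have "Sf p q n = s"
    unfolding Sf_def
  proof (rule the_equality)
    show "(\<forall>j>n. s j = 0) \<and> [:0, 1:] ^ n = (\<Sum>j\<le>n. smult (s j) (fall_F p q j))"
      using expansion by (simp add: s_def)
  next
    fix s' assume s': "(\<forall>j>n. s' j = 0) \<and> [:0, 1:] ^ n = (\<Sum>j\<le>n. smult (s' j) (fall_F p q j))"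
    then have "(\<Sum>j\<le>n. smult (s' j - s j) (linear_prod (\<lambda>i. - Fib p q i) j)) = 0"
      using expansion by (simp add: smult_diff_left sum_subtractf fall)
    then have "s' j = s j" if "j \<le> n" for j
      using linear_prod_independent that by fastforce
    with s' show "s' = s"
      by (auto simp: s_def not_le)
  qed
  then show ?thesis using assms by (simp add: s_def)
qed

theorem mainTheorem5:
  fixes p q :: "'a::comm_ring_1" and n k :: nat
  assumes "k \<le> n"
  shows "cf p q n k = fT n staircase (n - k) p q \<and> Sf p q n k = rT n staircase (n - k) p q"
proof
  have "rise_F p q = linear_prod (Fib p q)"
    unfolding rise_F_def linear_prod_def by auto
  then show "cf p q n k = fT n staircase (n - k) p q"
    using coeff_linear_prod[OF assms]
    by (simp add: cf_def fT_eq_sum_card_subsets file_number_def staircase_def)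
  show "Sf p q n k = rT n staircase (n - k) p q"
    using Sf_eq_rook_number[OF assms]
    by (simp add: rT_eq_sum_card_subsets rook_number_def staircase_def)
qed

end
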